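(* Let $\gamma\in\Gamma(2)$ and let $Z\in\mathfrak h_n$ be a point not fixed by any element of $\mathbf{Sp}(2n,\mathbb Z)$ other than $\pm I$. Suppose $\tau(Z)=\gamma Z$. Then there exists $h\in\mathbf{Sp}(2n,\mathbb Z)$ such that $\gamma=\tau(h)h^{-1}$; hence $\mathfrak h_n^\gamma=h\cdot iC_n$.
   Context: $\mathbf{Sp}(2n,\mathbb R)$: real matrices $g=\begin{pmatrix}A&B\\C&D\end{pmatrix}$ with ${}^tgJg=J$, $J=\begin{pmatrix}0&I\\-I&0\end{pmatrix}$, acting on $\mathfrak h_n=\{Z\in M_n(\mathbb C):{}^tZ=Z,\mathrm{Im}Z>0\}$ by $gZ=(AZ+B)(CZ+D)^{-1}$. $\tau\begin{pmatrix}A&B\\C&D\end{pmatrix}=\begin{pmatrix}A&-B\\-C&D\end{pmatrix}$ on matrices and $\tau(Z)=-\overline Z$ on $\mathfrak h_n$. $\mathfrak h_n^\gamma=\{Z:\gamma Z=\tau(Z)\}$. $\Gamma(2)=\{\gamma\in\mathbf{Sp}(2n,\mathbb Z):\gamma\equiv I\bmod 2\}$. $C_n$ is the cone of positive definite real symmetric $n\times n$ matrices, $iC_n=\{iY:Y\in C_n\}$. *)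

theory Defs
  imports "HOL-Analysis.Analysis"
begin

text \<open>Matrices of size 2n x 2n are indexed by the type 'n + 'n: the block
  (Inl,Inl) is A, (Inl,Inr) is B, (Inr,Inl) is C, (Inr,Inr) is D.\<close>

type_synonym 'n bmat = "real^('n + 'n)^('n + 'n)"

definition Jmat :: "('n::finite) bmat" where
  "Jmat = (\<chi> i j. case (i, j) of
      (Inl a, Inr b) \<Rightarrow> (if a = b then 1 else 0)
    | (Inr a, Inl b) \<Rightarrow> (if a = b then -1 else 0)
    | _ \<Rightarrow> 0)"

definition Sp :: "('n::finite) bmat set" where
  "Sp = {g. transpose g ** Jmat ** g = Jmat}"

definition SpZ :: "('n::finite) bmat set" where
  "SpZ = {g. g \<in> Sp \<and> (\<forall>i j. g $ i $ j \<in> \<int>)}"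

definition Gamma2 :: "('n::finite) bmat set" where
  "Gamma2 = {g. g \<in> SpZ \<and> (\<forall>i j. \<exists>k::int. g $ i $ j - mat 1 $ i $ j = 2 * of_int k)}"

definition blkA :: "('n::finite) bmat \<Rightarrow> real^'n^'n" where
  "blkA g = (\<chi> i j. g $ Inl i $ Inl j)"
definition blkB :: "('n::finite) bmat \<Rightarrow> real^'n^'n" where
  "blkB g = (\<chi> i j. g $ Inl i $ Inr j)"
definition blkC :: "('n::finite) bmat \<Rightarrow> real^'n^'n" where
  "blkC g = (\<chi> i j. g $ Inr i $ Inl j)"
definition blkD :: "('n::finite) bmat \<Rightarrow> real^'n^'n" where
  "blkD g = (\<chi> i j. g $ Inr i $ Inr j)"

definition cmat :: "real^'n^'m \<Rightarrow> complex^'n^'m" where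
  "cmat M = (\<chi> i j. complex_of_real (M $ i $ j))"

definition ImM :: "complex^'n^'m \<Rightarrow> real^'n^'m" where
  "ImM Z = (\<chi> i j. Im (Z $ i $ j))"

definition posdef_cone :: "(real^'n^'n) set" where
  "posdef_cone = {Y. transpose Y = Y \<and> (\<forall>x. x \<noteq> 0 \<longrightarrow> x \<bullet> (Y *v x) > 0)}"

definition siegel :: "(complex^('n::finite)^'n) set" where
  "siegel = {Z. transpose Z = Z \<and> ImM Z \<in> posdef_cone}"

definition sp_act :: "('n::finite) bmat \<Rightarrow> complex^'n^'n \<Rightarrow> complex^'n^'n" where
  "sp_act g Z = (cmat (blkA g) ** Z + cmat (blkB g)) **
                 matrix_inv (cmat (blkC g) ** Z + cmat (blkD g))"

definition tau_mat :: "('n::finite) bmat \<Rightarrow> ('n::finite) bmat" where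
  "tau_mat g = (\<chi> i j. case (i, j) of
      (Inl a, Inr b) \<Rightarrow> - g $ i $ j
    | (Inr a, Inl b) \<Rightarrow> - g $ i $ j
    | _ \<Rightarrow> g $ i $ j)"

definition tau_pt :: "complex^'n^'n \<Rightarrow> complex^'n^'n" where
  "tau_pt Z = (\<chi> i j. - cnj (Z $ i $ j))"

definition fixset :: "('n::finite) bmat \<Rightarrow> (complex^'n^'n) set" where
  "fixset \<gamma> = {Z \<in> siegel. sp_act \<gamma> Z = tau_pt Z}"

definition iCn :: "(complex^('n::finite)^'n) set" where
  "iCn = (\<lambda>Y. \<chi> i j. \<i> * complex_of_real (Y $ i $ j)) ` posdef_cone"

end

theory Submission
  imports Defs
begin

text \<open>
  If \<open>\<tau>(Z) = \<gamma> Z\<close>, then \<open>\<tau>(\<gamma>) \<gamma>\<close> fixes \<open>Z\<close>, so it is \<open>\<plusminus>1\<close>; writing \<open>\<gamma> = 1 + 2K\<close>, the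
  upper left diagonal entries of \<open>\<tau>(\<gamma>) \<gamma>\<close> are \<open>1\<close> mod \<open>4\<close>, so \<open>\<tau>(\<gamma>) \<gamma> = 1\<close>.
  As \<open>\<tau>(g) = E g E\<close> with \<open>E = diag(1, -1)\<close>, the matrix \<open>s = E \<gamma>\<close> is an integral involution that
  reverses the symplectic form \<open>\<omega>\<close>, and \<open>(1 + s)/2\<close> is integral. Take a \<open>\<int>\<close>-basis \<open>b\<^sub>i\<close> of the
  integral \<open>+1\<close>-eigenvectors of \<open>s\<close>; the projection \<open>(1 + s)/2\<close> yields integral dual functionals,
  and from them integral \<open>-1\<close>-eigenvectors \<open>f\<^sub>i\<close> with \<open>\<omega>(b\<^sub>i, f\<^sub>j) = \<delta>\<^sub>i\<^sub>j\<close>. The matrix \<open>h\<close>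
  with columns \<open>b\<^sub>i, f\<^sub>i\<close> lies in \<open>Sp(2n, \<int>)\<close> and satisfies \<open>s h = h E\<close>, i.e.
  \<open>\<gamma> = \<tau>(h) h\<^sup>-\<^sup>1\<close>. Finally \<open>h W\<close> is a fixed point of \<open>\<tau>(h) h\<^sup>-\<^sup>1\<close> iff \<open>\<tau>(W) = W\<close>, and the
  \<open>\<tau>\<close>-fixed points of the Siegel space are exactly \<open>i C\<^sub>n\<close>.
\<close>

lemma matrix_mul_lneg: "(- A) ** B = - (A ** (B::'a::ring_1^'p^'n))"
  by (simp add: vec_eq_iff matrix_matrix_mult_def sum_negf)

lemma matrix_mul_rneg: "A ** (- B) = - (A ** (B::'a::ring_1^'p^'n))"
  by (simp add: vec_eq_iff matrix_matrix_mult_def sum_negf)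

lemma matrix_add_rdistrib: "(A + B) ** C = A ** C + B ** (C::'a::semiring_1^'p^'n)"
  by (simp add: vec_eq_iff matrix_matrix_mult_def sum.distrib algebra_simps)

lemma matrix_diff_rdistrib: "(A - B) ** C = A ** C - B ** (C::'a::ring_1^'p^'n)"
  by (simp add: vec_eq_iff matrix_matrix_mult_def sum_subtractf algebra_simps)

lemma matrix_diff_ldistrib: "C ** (A - B) = C ** A - C ** (B::'a::ring_1^'p^'n)"
  by (simp add: vec_eq_iff matrix_matrix_mult_def sum_subtractf algebra_simps)

lemma matrix_inv_left_inverse:
  fixes A B :: "'a::field^'n^'n"
  assumes "B ** A = mat 1"
  shows "matrix_inv A = B" "invertible A"
proof -
  have ex: "\<exists>A'. A ** A' = mat 1 \<and> A' ** A = mat 1"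
    using assms matrix_left_right_inverse by blast
  then show "invertible A" using invertible_def by blast
  have "A ** matrix_inv A = mat 1"
    unfolding matrix_inv_def using someI_ex[OF ex] by blast
  then have "B ** (A ** matrix_inv A) = B" by simp
  then show "matrix_inv A = B" using assms by (simp add: matrix_mul_assoc)
qed

lemma invertible_matrix_inv:
  fixes A :: "'a::field^'n^'n"
  assumes "invertible A"
  shows "A ** matrix_inv A = mat 1" "matrix_inv A ** A = mat 1"
  using assms matrix_left_right_inverse unfolding invertible_def
  by (metis matrix_inv_left_inverse(1))+

lemma Ints_matrix_mult:
  assumes "\<forall>i j. A $ i $ j \<in> \<int>" "\<forall>i j. B $ i $ j \<in> \<int>"
  shows "\<forall>i j. (A ** (B::'a::ring_1^'p^'m)) $ i $ j \<in> \<int>"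
  using assms by (auto simp: matrix_matrix_mult_def intro!: Ints_sum Ints_mult)

lemma matrix_vector_mult_uminus:
  "A *v (- x) = - (A *v (x::'a::ring_1^'m))" "(- A) *v x = - (A *v x)"
  by (simp_all add: vec_eq_iff matrix_vector_mult_def sum_negf)

lemma inner_matrix_vector_mult: "(A *v x) \<bullet> y = x \<bullet> (transpose A *v (y::real^'m))"
  by (simp add: inner_vec_def matrix_vector_mult_def transpose_def sum_distrib_left sum_distrib_right mult_ac)
     (rule sum.swap)

lemma matrix_vector_mult_sum_scaleR:
  "A *v (\<Sum>i\<in>S. c i *\<^sub>R v i) = (\<Sum>i\<in>S. c i *\<^sub>R (A *v (v i::real^'m)))"
  by (simp add: vec_eq_iff matrix_vector_mult_def sum_distrib_left sum_distrib_right)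
     (subst sum.swap, simp add: mult_ac)

lemma transpose_mult_mult_entry:
  fixes A :: "real^'c^'m" and M :: "real^'m^'m"
  shows "(transpose A ** M ** A) $ x $ y = column x A \<bullet> (M *v column y A)"
proof -
  have "(transpose A ** M ** A) $ x $ y = (\<Sum>l\<in>UNIV. \<Sum>k\<in>UNIV. A $ k $ x * M $ k $ l * A $ l $ y)"
    by (simp add: matrix_matrix_mult_def transpose_def sum_distrib_right)
  also have "\<dots> = (\<Sum>k\<in>UNIV. \<Sum>l\<in>UNIV. A $ k $ x * M $ k $ l * A $ l $ y)" by (rule sum.swap)
  also have "\<dots> = column x A \<bullet> (M *v column y A)"
    by (simp add: inner_vec_def matrix_vector_mult_def column_def sum_distrib_left mult_ac)
  finally show ?thesis .
qed

lemma sum_mult_if_eq: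
  assumes "finite S" "b' \<in> S"
  shows "(\<Sum>b\<in>S. g b * (if b = b' then 1 else 0)) = (g b' :: 'a::semiring_1)"
proof -
  have "(\<Sum>b\<in>S. g b * (if b = b' then 1 else 0)) = (\<Sum>b\<in>S. if b = b' then g b else 0)"
    by (rule sum.cong) auto
  also have "\<dots> = g b'" using assms by (simp add: sum.delta')
  finally show ?thesis .
qed

lemma sum_scaleR_if_eq:
  assumes "finite S" "b' \<in> S"
  shows "(\<Sum>b\<in>S. (if b = b' then 1 else 0) *\<^sub>R (b::'a::real_vector)) = b'"
proof -
  have "(\<Sum>b\<in>S. (if b = b' then 1 else 0) *\<^sub>R b) = (\<Sum>b\<in>S. if b = b' then b else 0)"
    by (rule sum.cong) auto
  also have "\<dots> = b'" using assms by (simp add: sum.delta')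
  finally show ?thesis .
qed

lemma sum_UNIV_Plus:
  "(\<Sum>x\<in>(UNIV::('a::finite + 'b::finite) set). f x) = (\<Sum>a\<in>UNIV. f (Inl a)) + (\<Sum>b\<in>UNIV. f (Inr b))"
proof -
  have "(\<Sum>x\<in>(UNIV::('a + 'b) set). f x) = (\<Sum>x\<in>UNIV <+> UNIV. f x)" by simp
  also have "\<dots> = (\<Sum>a\<in>UNIV. f (Inl a)) + (\<Sum>b\<in>UNIV. f (Inr b))"
    by (subst sum.Plus) (simp_all add: comp_def)
  finally show ?thesis .
qed

lemma sum_if_eq_mult [simp]:
  fixes f :: "'a::finite \<Rightarrow> 'b::comm_semiring_1"
  shows "(\<Sum>a\<in>UNIV. (if x = a then c else 0) * f a) = c * f x"
    "(\<Sum>a\<in>UNIV. (if a = x then c else 0) * f a) = c * f x"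
    "(\<Sum>a\<in>UNIV. f a * (if x = a then c else 0)) = f x * c"
    "(\<Sum>a\<in>UNIV. f a * (if a = x then c else 0)) = f x * c"
  by (simp_all add: if_distrib[of "\<lambda>u. u * _"] if_distrib[of "\<lambda>u. _ * u"] sum.delta sum.delta'
      cong: if_cong)

lemma matrix_mult_Plus_entry:
  "((A::'a::comm_semiring_1^('n::finite + 'n)^'m) ** B) $ i $ j =
     (\<Sum>a\<in>UNIV. A $ i $ Inl a * B $ Inl a $ j) + (\<Sum>a\<in>UNIV. A $ i $ Inr a * B $ Inr a $ j)"
  by (simp add: matrix_matrix_mult_def sum_UNIV_Plus)

lemma bmat_eqI:
  fixes A B :: "'a^('n::finite + 'n)^('n + 'n)"
  assumes "\<And>a b. A $ Inl a $ Inl b = B $ Inl a $ Inl b" "\<And>a b. A $ Inl a $ Inr b = B $ Inl a $ Inr b"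
    "\<And>a b. A $ Inr a $ Inl b = B $ Inr a $ Inl b" "\<And>a b. A $ Inr a $ Inr b = B $ Inr a $ Inr b"
  shows "A = B"
  unfolding vec_eq_iff by (metis assms sum.exhaust)

definition Emat :: "('n::finite) bmat" where
  "Emat = (\<chi> i j. if i = j then (case i of Inl _ \<Rightarrow> 1 | Inr _ \<Rightarrow> -1) else 0)"

lemma Jmat_entries:
  "Jmat $ Inl a $ Inl b = 0" "Jmat $ Inl a $ Inr b = (if a = b then 1 else 0)"
  "Jmat $ Inr a $ Inl b = (if a = b then -1 else 0)" "Jmat $ Inr a $ Inr b = 0"
  by (simp_all add: Jmat_def)

lemma Emat_entries:
  "Emat $ Inl a $ Inl b = (if a = b then 1 else 0)" "Emat $ Inl a $ Inr b = 0"
  "Emat $ Inr a $ Inl b = 0" "Emat $ Inr a $ Inr b = (if a = b then -1 else 0)"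
  by (simp_all add: Emat_def)

lemma mat_1_Plus_entries:
  "(mat 1 :: 'n::finite bmat) $ Inl a $ Inl b = (if a = b then 1 else 0)"
  "(mat 1 :: 'n::finite bmat) $ Inl a $ Inr b = 0"
  "(mat 1 :: 'n::finite bmat) $ Inr a $ Inl b = 0"
  "(mat 1 :: 'n::finite bmat) $ Inr a $ Inr b = (if a = b then 1 else 0)"
  by (simp_all add: mat_def)

lemma Emat_mult_Emat: "Emat ** Emat = (mat 1 :: 'n::finite bmat)"
  by (rule bmat_eqI) (simp_all add: sum_negf matrix_mult_Plus_entry Emat_entries mat_1_Plus_entries)

lemma Jmat_mult_Jmat: "Jmat ** Jmat = - (mat 1 :: 'n::finite bmat)"
  by (rule bmat_eqI) (simp_all add: sum_negf matrix_mult_Plus_entry Jmat_entries mat_1_Plus_entries)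

lemma Emat_Jmat_Emat: "Emat ** Jmat ** Emat = - (Jmat :: 'n::finite bmat)"
  by (rule bmat_eqI) (simp_all add: sum_negf matrix_mult_Plus_entry Jmat_entries Emat_entries)

lemma transpose_Emat: "transpose Emat = (Emat :: 'n::finite bmat)"
  by (rule bmat_eqI) (simp_all add: transpose_def Emat_entries)

lemma transpose_Jmat: "transpose Jmat = - (Jmat :: 'n::finite bmat)"
  by (rule bmat_eqI) (simp_all add: transpose_def Jmat_entries)

lemma tau_mat_eq_Emat_conj: "tau_mat g = Emat ** g ** Emat"
  by (rule bmat_eqI) (simp_all add: sum_negf tau_mat_def matrix_mult_Plus_entry Emat_entries)

section \<open>The symplectic group\<close>

lemma Sp_mult: "g \<in> Sp \<Longrightarrow> h \<in> Sp \<Longrightarrow> g ** h \<in> Sp"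
  unfolding Sp_def by (simp add: matrix_transpose_mul matrix_mul_assoc) (metis matrix_mul_assoc)

lemma Sp_invertible:
  assumes "g \<in> Sp"
  shows "invertible g"
proof -
  have "- (Jmat ** transpose g ** Jmat) ** g = - (Jmat ** (transpose g ** Jmat ** g))"
    by (simp add: matrix_mul_lneg matrix_mul_assoc)
  also have "\<dots> = mat 1" using assms by (simp add: Sp_def Jmat_mult_Jmat)
  finally show ?thesis using matrix_inv_left_inverse(2) by blast
qed

lemma Sp_matrix_inv:
  assumes "g \<in> Sp"
  shows "g ** matrix_inv g = mat 1" "matrix_inv g ** g = mat 1"
  using invertible_matrix_inv Sp_invertible[OF assms] by blast+

lemma matrix_inv_in_Sp:
  assumes "g \<in> Sp"
  shows "matrix_inv g \<in> Sp"
proof -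
  let ?h = "matrix_inv g"
  have "transpose ?h ** Jmat ** ?h = transpose ?h ** (transpose g ** Jmat ** g) ** ?h"
    using assms by (simp add: Sp_def)
  also have "\<dots> = transpose (g ** ?h) ** Jmat ** (g ** ?h)"
    by (simp add: matrix_transpose_mul matrix_mul_assoc)
  also have "\<dots> = Jmat" using Sp_matrix_inv[OF assms] by simp
  finally show ?thesis by (simp add: Sp_def)
qed

lemma tau_mat_in_Sp:
  assumes "g \<in> Sp"
  shows "tau_mat g \<in> Sp"
proof -
  have "transpose (tau_mat g) ** Jmat ** tau_mat g
      = Emat ** transpose g ** (Emat ** Jmat ** Emat) ** g ** Emat"
    by (simp add: tau_mat_eq_Emat_conj matrix_transpose_mul transpose_Emat matrix_mul_assoc)
  also have "\<dots> = - (Emat ** (transpose g ** Jmat ** g) ** Emat)"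
    by (simp add: Emat_Jmat_Emat matrix_mul_lneg matrix_mul_rneg matrix_mul_assoc)
  also have "\<dots> = Jmat" using assms by (simp add: Sp_def Emat_Jmat_Emat)
  finally show ?thesis by (simp add: Sp_def)
qed

lemma SpZ_mult: "g \<in> SpZ \<Longrightarrow> h \<in> SpZ \<Longrightarrow> g ** h \<in> SpZ"
  unfolding SpZ_def using Sp_mult Ints_matrix_mult by blast

lemma tau_mat_in_SpZ: "g \<in> SpZ \<Longrightarrow> tau_mat g \<in> SpZ"
  unfolding SpZ_def using tau_mat_in_Sp by (auto simp: tau_mat_def split: sum.splits)

section \<open>The action on the Siegel upper half space\<close>

lemma cmat_mult: "cmat (A ** B) = cmat A ** cmat (B::real^'p^'m)"
  by (simp add: vec_eq_iff cmat_def matrix_matrix_mult_def)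

lemma cmat_transpose: "cmat (transpose A) = transpose (cmat A)"
  by (simp add: vec_eq_iff cmat_def transpose_def)

lemma cmat_mat: "cmat (mat 1) = mat 1"
  by (simp add: vec_eq_iff cmat_def mat_def)

definition cconj :: "complex^'a^'b \<Rightarrow> complex^'a^'b" where
  "cconj M = (\<chi> i j. cnj (M $ i $ j))"

definition ctranspose :: "complex^'a^'b \<Rightarrow> complex^'b^'a" where
  "ctranspose M = (\<chi> i j. cnj (M $ j $ i))"

lemma cconj_mult: "cconj (A ** B) = cconj A ** cconj (B::complex^'p^'m)"
  by (simp add: vec_eq_iff cconj_def matrix_matrix_mult_def)

lemma cconj_cmat: "cconj (cmat A) = cmat A"
  by (simp add: vec_eq_iff cconj_def cmat_def)

lemma cconj_mat: "cconj (mat 1) = mat 1"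
  by (simp add: vec_eq_iff cconj_def mat_def)

lemma invertible_cconj: "invertible Q \<Longrightarrow> invertible (cconj Q)"
  unfolding invertible_def by (metis cconj_mult cconj_mat)

lemma ctranspose_mult: "ctranspose (A ** B) = ctranspose B ** ctranspose (A::complex^'p^'m)"
  by (simp add: vec_eq_iff ctranspose_def matrix_matrix_mult_def mult.commute)

lemma ctranspose_cmat: "ctranspose (cmat A) = cmat (transpose A)"
  by (simp add: vec_eq_iff ctranspose_def cmat_def transpose_def)

lemma ctranspose_ctranspose: "ctranspose (ctranspose A) = A"
  by (simp add: vec_eq_iff ctranspose_def)

lemma ctranspose_mat: "ctranspose (mat 1) = mat 1"
  by (simp add: vec_eq_iff ctranspose_def mat_def)

definition stack :: "complex^'c^('n::finite) \<Rightarrow> complex^'c^'n \<Rightarrow> complex^'c^('n + 'n)" where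
  "stack T R = (\<chi> r c. case r of Inl i \<Rightarrow> T $ i $ c | Inr i \<Rightarrow> R $ i $ c)"

lemma stack_mult: "stack T R ** Q = stack (T ** Q) (R ** Q)"
  by (simp add: vec_eq_iff stack_def matrix_matrix_mult_def split: sum.splits)

lemma stack_eq_iff: "stack T R = stack T' R' \<longleftrightarrow> T = T' \<and> R = R'"
proof
  assume "stack T R = stack T' R'"
  then have "\<And>i c. T $ i $ c = T' $ i $ c" "\<And>i c. R $ i $ c = R' $ i $ c"
    by (metis (no_types, lifting) stack_def sum.case vec_lambda_beta)+
  then show "T = T' \<and> R = R'" by (simp add: vec_eq_iff)
qed simp

lemma cmat_mult_stack:
  "cmat g ** stack T R = stack (cmat (blkA g) ** T + cmat (blkB g) ** R) (cmat (blkC g) ** T + cmat (blkD g) ** R)"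
proof -
  have "(cmat g ** stack T R) $ r $ c
      = stack (cmat (blkA g) ** T + cmat (blkB g) ** R) (cmat (blkC g) ** T + cmat (blkD g) ** R) $ r $ c"
    for r c
    by (cases r) (simp_all add: stack_def cmat_def matrix_matrix_mult_def sum_UNIV_Plus
        blkA_def blkB_def blkC_def blkD_def)
  then show ?thesis by (simp add: vec_eq_iff)
qed

text \<open>The projective form of \<open>g X = W\<close>: \<open>g (X; 1) = (W; 1) Q\<close>, where necessarily \<open>Q = C X + D\<close>.\<close>

definition sp_lift :: "('n::finite) bmat \<Rightarrow> complex^'n^'n \<Rightarrow> complex^'n^'n \<Rightarrow> complex^'n^'n \<Rightarrow> bool" where
  "sp_lift g X W Q \<longleftrightarrow> cmat g ** stack X (mat 1) = stack (W ** Q) Q \<and> invertible Q"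

lemma sp_lift_iff_blocks:
  "sp_lift g X W Q \<longleftrightarrow>
     cmat (blkA g) ** X + cmat (blkB g) = W ** Q \<and> cmat (blkC g) ** X + cmat (blkD g) = Q \<and> invertible Q"
  unfolding sp_lift_def cmat_mult_stack stack_eq_iff by simp

lemma sp_lift_sp_act: "sp_lift g X W Q \<Longrightarrow> sp_act g X = W"
  unfolding sp_lift_iff_blocks sp_act_def
  by (metis invertible_matrix_inv(1) matrix_mul_assoc matrix_mul_rid)

lemma sp_lift_mult: "sp_lift g X W Q \<Longrightarrow> sp_lift g' W V Q' \<Longrightarrow> sp_lift (g' ** g) X V (Q' ** Q)"
  unfolding sp_lift_def
  by (simp add: invertible_mult cmat_mult stack_mult flip: matrix_mul_assoc)
     (metis stack_mult matrix_mul_lid matrix_mul_assoc)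

lemma sp_lift_mat: "sp_lift (mat 1) X X (mat 1)"
  by (simp add: sp_lift_def cmat_mat invertible_def)

lemma cmat_tau_mat: "cmat (tau_mat g) = cmat Emat ** cmat g ** cmat Emat"
  by (simp add: tau_mat_eq_Emat_conj cmat_mult)

lemma cmat_Emat_mult_Emat: "cmat Emat ** cmat Emat = mat 1"
  by (simp flip: cmat_mult add: Emat_mult_Emat cmat_mat)

lemma stack_tau_pt: "stack (tau_pt X) (mat 1) = - (cmat Emat ** cconj (stack X (mat 1)))"
proof -
  have "stack (tau_pt X) (mat 1) $ r $ c = (- (cmat Emat ** cconj (stack X (mat 1)))) $ r $ c" for r c
    by (cases r) (simp_all add: matrix_mult_Plus_entry stack_def cmat_def Emat_entries cconj_def
        tau_pt_def mat_def if_distrib[of complex_of_real] if_distrib[of cnj] cong: if_cong)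
  then show ?thesis by (simp add: vec_eq_iff)
qed

lemma sp_lift_tau: "sp_lift g X W Q \<Longrightarrow> sp_lift (tau_mat g) (tau_pt X) (tau_pt W) (cconj Q)"
proof -
  assume "sp_lift g X W Q"
  then have lift: "cmat g ** stack X (mat 1) = stack W (mat 1) ** Q" and Q: "invertible Q"
    by (simp_all add: sp_lift_def stack_mult)
  have "cmat (tau_mat g) ** stack (tau_pt X) (mat 1)
      = - (cmat Emat ** cmat g ** (cmat Emat ** cmat Emat) ** cconj (stack X (mat 1)))"
    by (simp add: cmat_tau_mat stack_tau_pt matrix_mul_rneg matrix_mul_assoc)
  also have "\<dots> = - (cmat Emat ** cconj (cmat g ** stack X (mat 1)))"
    by (simp add: cmat_Emat_mult_Emat cconj_mult cconj_cmat matrix_mul_assoc)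
  also have "\<dots> = stack (tau_pt W) (mat 1) ** cconj Q"
    by (simp add: lift cconj_mult stack_tau_pt matrix_mul_lneg matrix_mul_rneg matrix_mul_assoc)
  finally show ?thesis using Q by (simp add: sp_lift_def stack_mult invertible_cconj)
qed

definition cdot :: "complex^'k \<Rightarrow> complex^'k \<Rightarrow> complex" where
  "cdot u w = (\<Sum>i\<in>UNIV. cnj (u $ i) * w $ i)"

lemma cdot_matrix_vector_mult: "cdot u (A *v w) = cdot (ctranspose A *v u) w"
  by (simp add: cdot_def ctranspose_def matrix_vector_mult_def sum_distrib_left sum_distrib_right mult_ac)
     (rule sum.swap)

lemma cdot_ctranspose_mult: "cdot v ((ctranspose A ** B) *v v) = cdot (A *v v) (B *v v)"
  by (simp add: cdot_matrix_vector_mult ctranspose_ctranspose flip: matrix_vector_mul_assoc)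

lemma cdot_diff: "cdot v ((A - B) *v v) = cdot v (A *v v) - cdot v (B *v v)"
  by (simp add: cdot_def matrix_vector_mult_diff_rdistrib algebra_simps sum_subtractf)

lemma cdot_zero: "cdot 0 w = 0" "cdot w 0 = 0"
  by (simp_all add: cdot_def)

lemma cdot_ctranspose_minus_symmetric:
  assumes "transpose W = W"
  shows "cdot u ((ctranspose W - W) *v u) = (-2 * \<i>) * cdot u (cmat (ImM W) *v u)"
proof -
  have "W $ j $ i = W $ i $ j" for i j using assms by (metis transpose_def vec_lambda_beta)
  then have "ctranspose W - W = (\<chi> i j. (-2 * \<i>) * cmat (ImM W) $ i $ j)"
    by (simp add: vec_eq_iff ctranspose_def cmat_def ImM_def complex_eq_iff)
  then show ?thesis by (simp add: cdot_def matrix_vector_mult_def sum_distrib_left mult_ac)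
qed

definition cvec :: "real^'k \<Rightarrow> complex^'k" where
  "cvec x = (\<chi> i. complex_of_real (x $ i))"

lemma cdot_cvec: "cdot (cvec x) (cmat Y *v cvec x) = complex_of_real (x \<bullet> (Y *v x))"
  by (simp add: cdot_def cvec_def cmat_def matrix_vector_mult_def inner_vec_def)

lemma posdef_cone_cdot_pos:
  assumes "Y \<in> posdef_cone" "v \<noteq> 0"
  shows "Re (cdot v (cmat Y *v v)) > 0"
proof -
  define a where "a = (\<chi> i. Re (v $ i))"
  define b where "b = (\<chi> i. Im (v $ i))"
  have "Re (cdot v (cmat Y *v v)) = (\<Sum>i\<in>UNIV. \<Sum>j\<in>UNIV. Y $ i $ j * (a $ i * a $ j + b $ i * b $ j))"
    by (simp add: cdot_def cmat_def matrix_vector_mult_def a_def b_def sum_distrib_left algebra_simps)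
  also have "\<dots> = a \<bullet> (Y *v a) + b \<bullet> (Y *v b)"
    by (simp add: inner_vec_def matrix_vector_mult_def sum_distrib_left algebra_simps sum.distrib)
  finally have Re_eq: "Re (cdot v (cmat Y *v v)) = a \<bullet> (Y *v a) + b \<bullet> (Y *v b)" .
  have pos: "x = 0 \<or> x \<bullet> (Y *v x) > 0" for x using assms(1) by (auto simp: posdef_cone_def)
  have "a \<noteq> 0 \<or> b \<noteq> 0"
    using assms(2) by (auto simp: a_def b_def vec_eq_iff complex_eq_iff)
  then show ?thesis unfolding Re_eq using pos[of a] pos[of b] by auto
qed

lemma cmat_Jmat_mult_stack: "cmat Jmat ** stack T R = stack R (- T)"
proof -
  have "(cmat Jmat ** stack T R) $ r $ c = stack R (- T) $ r $ c" for r c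
    by (cases r) (simp_all add: matrix_mult_Plus_entry stack_def cmat_def Jmat_entries sum_negf
        if_distrib[of complex_of_real] cong: if_cong)
  then show ?thesis by (simp add: vec_eq_iff)
qed

lemma ctranspose_stack_mult_stack:
  "ctranspose (stack T R) ** stack T' R' = ctranspose T ** T' + ctranspose R ** R'"
  by (simp add: vec_eq_iff matrix_matrix_mult_def sum_UNIV_Plus ctranspose_def stack_def)

lemma transpose_stack_mult_stack:
  "transpose (stack T R) ** stack T' R' = transpose T ** T' + transpose R ** R'"
  by (simp add: vec_eq_iff matrix_matrix_mult_def sum_UNIV_Plus transpose_def stack_def)

lemma ctranspose_stack_Jmat_stack:
  "ctranspose (stack T R) ** cmat Jmat ** stack T R = ctranspose T ** R - ctranspose R ** T"
  by (simp add: cmat_Jmat_mult_stack ctranspose_stack_mult_stack matrix_mul_rneg flip: matrix_mul_assoc)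

lemma transpose_stack_Jmat_stack:
  "transpose (stack T R) ** cmat Jmat ** stack T R = transpose T ** R - transpose R ** T"
  by (simp add: cmat_Jmat_mult_stack transpose_stack_mult_stack matrix_mul_rneg flip: matrix_mul_assoc)

text \<open>Both identities compare \<open>M\<^sup>* J M\<close> (resp. \<open>M\<^sup>T J M\<close>) at \<open>M = g (X; 1) = (T; Q)\<close> and
  at \<open>M = (X; 1)\<close>.\<close>

lemma Sp_preserves_forms:
  assumes g: "g \<in> Sp" and lift: "cmat g ** stack X (mat 1) = stack T Q"
  shows "ctranspose T ** Q - ctranspose Q ** T = ctranspose X - X"
    and "transpose T ** Q - transpose Q ** T = transpose X - X"
proof -
  have J: "transpose g ** Jmat ** g = Jmat" using g by (simp add: Sp_def)
  have "ctranspose (stack T Q) ** cmat Jmat ** stack T Q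
      = ctranspose (stack X (mat 1)) ** cmat (transpose g ** Jmat ** g) ** stack X (mat 1)"
    by (simp add: lift[symmetric] ctranspose_mult ctranspose_cmat cmat_mult matrix_mul_assoc)
  then show "ctranspose T ** Q - ctranspose Q ** T = ctranspose X - X"
    by (simp add: J ctranspose_stack_Jmat_stack ctranspose_mat)
  have "transpose (stack T Q) ** cmat Jmat ** stack T Q
      = transpose (stack X (mat 1)) ** cmat (transpose g ** Jmat ** g) ** stack X (mat 1)"
    by (simp add: lift[symmetric] matrix_transpose_mul cmat_transpose cmat_mult matrix_mul_assoc)
  then show "transpose T ** Q - transpose Q ** T = transpose X - X"
    by (simp add: J transpose_stack_Jmat_stack)
qed

lemma Sp_denominator_invertible:
  assumes g: "g \<in> Sp" and X: "X \<in> siegel"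
  shows "invertible (cmat (blkC g) ** X + cmat (blkD g))" (is "invertible ?Q")
proof -
  define T where "T = cmat (blkA g) ** X + cmat (blkB g)"
  have "cmat g ** stack X (mat 1) = stack T ?Q" by (simp add: cmat_mult_stack T_def)
  from Sp_preserves_forms(1)[OF g this]
  have forms: "ctranspose T ** ?Q - ctranspose ?Q ** T = ctranspose X - X" .
  have Xsym: "transpose X = X" and Xpos: "ImM X \<in> posdef_cone" using X by (auto simp: siegel_def)
  have "v = 0" if Qv: "?Q *v v = 0" for v
  proof (rule ccontr)
    assume "v \<noteq> 0"
    then have "Re (cdot v (cmat (ImM X) *v v)) > 0" by (rule posdef_cone_cdot_pos[OF Xpos])
    moreover have "cdot v ((ctranspose X - X) *v v) = 0"
      by (simp flip: forms add: cdot_diff cdot_ctranspose_mult Qv cdot_zero)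
    ultimately show False by (simp add: cdot_ctranspose_minus_symmetric[OF Xsym])
  qed
  then show ?thesis using matrix_left_invertible_ker invertible_left_inverse by blast
qed

lemma sp_lift_of_siegel:
  assumes "g \<in> Sp" "X \<in> siegel"
  shows "sp_lift g X (sp_act g X) (cmat (blkC g) ** X + cmat (blkD g))"
  using Sp_denominator_invertible[OF assms] unfolding sp_lift_iff_blocks sp_act_def
  by (simp add: invertible_matrix_inv(2) flip: matrix_mul_assoc)

lemma sp_lift_symmetric:
  assumes g: "g \<in> Sp" and lift: "sp_lift g X W Q" and Xsym: "transpose X = X"
  shows "transpose W = W"
proof -
  obtain Q' where Q': "Q ** Q' = mat 1" using lift by (auto simp: sp_lift_def invertible_def)
  have "transpose (W ** Q) ** Q - transpose Q ** (W ** Q) = transpose X - X"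
    using Sp_preserves_forms(2)[OF g] lift by (simp add: sp_lift_def)
  then have form: "transpose Q ** (transpose W - W) ** Q = 0"
    by (simp add: Xsym matrix_transpose_mul matrix_diff_rdistrib matrix_diff_ldistrib matrix_mul_assoc)
  have "transpose W - W = transpose (Q ** Q') ** (transpose W - W) ** (Q ** Q')"
    by (simp add: Q')
  also have "\<dots> = transpose Q' ** (transpose Q ** (transpose W - W) ** Q) ** Q'"
    by (simp add: matrix_transpose_mul matrix_mul_assoc)
  also have "\<dots> = 0" by (simp add: form)
  finally show ?thesis by simp
qed

lemma sp_lift_Im_posdef:
  assumes g: "g \<in> Sp" and lift: "sp_lift g X W Q" and X: "X \<in> siegel" and Wsym: "transpose W = W"
  shows "ImM W \<in> posdef_cone"
proof -
  have Xsym: "transpose X = X" and Xpos: "ImM X \<in> posdef_cone" using X by (auto simp: siegel_def)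
  obtain Q' where Q': "Q ** Q' = mat 1" using lift by (auto simp: sp_lift_def invertible_def)
  have "ctranspose (W ** Q) ** Q - ctranspose Q ** (W ** Q) = ctranspose X - X"
    using Sp_preserves_forms(1)[OF g] lift by (simp add: sp_lift_def)
  then have forms: "ctranspose Q ** ((ctranspose W - W) ** Q) = ctranspose X - X"
    by (simp add: ctranspose_mult matrix_diff_rdistrib matrix_diff_ldistrib matrix_mul_assoc)
  have "x \<bullet> (ImM W *v x) > 0" if "x \<noteq> 0" for x
  proof -
    define v where "v = Q' *v cvec x"
    have Qv: "Q *v v = cvec x" by (simp add: v_def matrix_vector_mul_assoc Q')
    have "cvec x \<noteq> 0" using that by (auto simp: cvec_def vec_eq_iff)
    then have "v \<noteq> 0" using Qv by auto
    then have "Re (cdot v (cmat (ImM X) *v v)) > 0" by (rule posdef_cone_cdot_pos[OF Xpos])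
    moreover have "cdot v ((ctranspose X - X) *v v) = cdot (cvec x) ((ctranspose W - W) *v cvec x)"
      by (simp flip: forms Qv add: cdot_ctranspose_mult matrix_vector_mul_assoc)
    ultimately show ?thesis
      by (simp add: cdot_ctranspose_minus_symmetric Xsym Wsym cdot_cvec)
  qed
  moreover have "transpose (ImM W) = ImM W"
  proof -
    have "W $ j $ i = W $ i $ j" for i j using Wsym by (metis transpose_def vec_lambda_beta)
    then show ?thesis by (simp add: vec_eq_iff transpose_def ImM_def)
  qed
  ultimately show ?thesis by (simp add: posdef_cone_def)
qed

lemma sp_act_in_siegel:
  assumes "g \<in> Sp" "X \<in> siegel"
  shows "sp_act g X \<in> siegel"
proof -
  have lift: "sp_lift g X (sp_act g X) (cmat (blkC g) ** X + cmat (blkD g))"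
    using sp_lift_of_siegel[OF assms] .
  have "transpose (sp_act g X) = sp_act g X"
    using sp_lift_symmetric[OF assms(1) lift] assms(2) by (simp add: siegel_def)
  with sp_lift_Im_posdef[OF assms(1) lift assms(2)] show ?thesis by (simp add: siegel_def)
qed

lemma sp_act_mult:
  assumes "g \<in> Sp" "h \<in> Sp" "X \<in> siegel"
  shows "sp_act (g ** h) X = sp_act g (sp_act h X)"
  using sp_lift_mult[OF sp_lift_of_siegel[OF assms(2,3)]
      sp_lift_of_siegel[OF assms(1) sp_act_in_siegel[OF assms(2,3)]]]
  by (rule sp_lift_sp_act)

lemma sp_act_mat: "sp_act (mat 1) X = X"
  using sp_lift_sp_act[OF sp_lift_mat] .

lemma sp_act_matrix_inv:
  assumes "h \<in> Sp" "X \<in> siegel"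
  shows "sp_act (matrix_inv h) (sp_act h X) = X" "sp_act h (sp_act (matrix_inv h) X) = X"
  using sp_act_mult[OF matrix_inv_in_Sp[OF assms(1)] assms(1)] sp_act_mult[OF assms(1) matrix_inv_in_Sp[OF assms(1)]]
    Sp_matrix_inv[OF assms(1)] assms(2) by (simp_all add: sp_act_mat)

lemma sp_act_inj:
  assumes "h \<in> Sp" "X \<in> siegel" "Y \<in> siegel" "sp_act h X = sp_act h Y"
  shows "X = Y"
  by (metis assms sp_act_matrix_inv(1))

lemma sp_act_tau:
  assumes "g \<in> Sp" "X \<in> siegel"
  shows "sp_act (tau_mat g) (tau_pt X) = tau_pt (sp_act g X)"
  using sp_lift_tau[OF sp_lift_of_siegel[OF assms]] by (rule sp_lift_sp_act)

lemma tau_pt_tau_pt: "tau_pt (tau_pt X) = X"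
  by (simp add: tau_pt_def vec_eq_iff)

lemma tau_pt_in_siegel:
  assumes "X \<in> siegel"
  shows "tau_pt X \<in> siegel"
proof -
  have "transpose (tau_pt X) = tau_pt (transpose X)"
    by (simp add: vec_eq_iff transpose_def tau_pt_def)
  moreover have "ImM (tau_pt X) = ImM X"
    by (simp add: vec_eq_iff ImM_def tau_pt_def)
  ultimately show ?thesis using assms by (simp add: siegel_def)
qed

section \<open>Lattices of integer vectors\<close>

definition int_vec :: "real^'m \<Rightarrow> bool" where
  "int_vec v \<longleftrightarrow> (\<forall>k. v $ k \<in> \<int>)"

definition int_lattice :: "(real^'m) set \<Rightarrow> bool" where
  "int_lattice L \<longleftrightarrow> 0 \<in> L \<and> (\<forall>x\<in>L. \<forall>y\<in>L. x + y \<in> L) \<and> (\<forall>x\<in>L. \<forall>c\<in>\<int>. c *\<^sub>R x \<in> L)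
     \<and> (\<forall>x\<in>L. int_vec x)"

definition int_spans :: "(real^'m) set \<Rightarrow> (real^'m) set \<Rightarrow> bool" where
  "int_spans B L \<longleftrightarrow> (\<forall>v\<in>L. \<exists>c. (\<forall>b\<in>B. c b \<in> \<int>) \<and> v = (\<Sum>b\<in>B. c b *\<^sub>R b))"

definition supported_on :: "(real^'m) set \<Rightarrow> 'm set \<Rightarrow> (real^'m) set" where
  "supported_on L S = {v\<in>L. \<forall>k. k \<notin> S \<longrightarrow> v $ k = 0}"

lemma int_vec_diff: "int_vec x \<Longrightarrow> int_vec y \<Longrightarrow> int_vec (x - y)"
  by (simp add: int_vec_def)

lemma int_vec_uminus: "int_vec x \<Longrightarrow> int_vec (- x)"
  by (simp add: int_vec_def)

lemma int_vec_matrix_vector_mult: "\<forall>i j. A $ i $ j \<in> \<int> \<Longrightarrow> int_vec x \<Longrightarrow> int_vec (A *v x)"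
  by (auto simp: int_vec_def matrix_vector_mult_def intro!: Ints_sum Ints_mult)

lemma int_lattice_supported_on: "int_lattice L \<Longrightarrow> int_lattice (supported_on L S)"
  by (auto simp: int_lattice_def supported_on_def)

lemma int_lattice_diff_scaleR:
  assumes "int_lattice L" "x \<in> L" "y \<in> L" "c \<in> \<int>"
  shows "x - c *\<^sub>R y \<in> L"
proof -
  have "(- c) *\<^sub>R y \<in> L" using assms by (metis Ints_minus int_lattice_def)
  then show ?thesis using assms by (metis int_lattice_def scaleR_minus_left diff_conv_add_uminus)
qed

lemma int_lattice_coordinate_reduce:
  assumes L: "int_lattice L" and v0: "v0 \<in> L" "v0 $ a = real d" "d > 0"
    and least: "\<And>w k. w \<in> L \<Longrightarrow> w $ a = real k \<Longrightarrow> k > 0 \<Longrightarrow> d \<le> k"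
    and w: "w \<in> L"
  shows "\<exists>q\<in>\<int>. (w - q *\<^sub>R v0) $ a = 0"
proof -
  have "w $ a \<in> \<int>" using L w by (simp add: int_lattice_def int_vec_def)
  then obtain m where m: "w $ a = of_int m" by (auto elim: Ints_cases)
  define q where "q = m div int d"
  define r where "r = m mod int d"
  have r: "0 \<le> r" "r < int d" using v0(3) by (auto simp: r_def)
  have wq: "w - of_int q *\<^sub>R v0 \<in> L" using int_lattice_diff_scaleR[OF L w v0(1)] by simp
  have wqa: "(w - of_int q *\<^sub>R v0) $ a = real (nat r)"
  proof -
    have "m = q * int d + r" by (simp add: q_def r_def)
    then show ?thesis using m v0(2) r(1) by simp
  qed
  have "r = 0"
    using least[OF wq wqa] r by linarith
  then show ?thesis using wqa by (intro bexI[of _ "of_int q"]) auto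
qed

text \<open>A vector whose \<open>a\<close>-th coordinate is the least positive one occurring in \<open>L\<close>.\<close>

lemma int_lattice_coordinate_generator:
  assumes L: "int_lattice L" and v: "v \<in> L" "v $ a \<noteq> 0"
  obtains v0 where "v0 \<in> L" "v0 $ a \<noteq> 0" "\<And>w. w \<in> L \<Longrightarrow> \<exists>q\<in>\<int>. (w - q *\<^sub>R v0) $ a = 0"
proof -
  define D where "D = {k::nat. k > 0 \<and> (\<exists>w\<in>L. w $ a = real k)}"
  have "v $ a \<in> \<int>" using L v(1) by (simp add: int_lattice_def int_vec_def)
  then obtain z where z: "v $ a = of_int z" by (auto elim: Ints_cases)
  have "(-1) *\<^sub>R v \<in> L" using L v(1) unfolding int_lattice_def by (metis Ints_1 Ints_minus)
  then have "nat \<bar>z\<bar> \<in> D"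
    using v z by (cases "z > 0") (auto simp: D_def intro: bexI[of _ v] bexI[of _ "- v"])
  then have "(LEAST k. k \<in> D) \<in> D" by (rule LeastI)
  then obtain v0 where v0: "v0 \<in> L" "v0 $ a = real (LEAST k. k \<in> D)" "(LEAST k. k \<in> D) > 0"
    by (auto simp: D_def)
  have "(LEAST k. k \<in> D) \<le> k" if "w \<in> L" "w $ a = real k" "k > 0" for w k
    using that by (intro Least_le) (auto simp: D_def)
  then show ?thesis
    using that v0 int_lattice_coordinate_reduce[OF L v0] by auto
qed

lemma int_spans_insert:
  assumes B: "finite B" "int_spans B M" and v0: "v0 \<notin> B"
    and reduce: "\<And>w. w \<in> L \<Longrightarrow> \<exists>q\<in>\<int>. w - q *\<^sub>R v0 \<in> M"
  shows "int_spans (insert v0 B) L"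
  unfolding int_spans_def
proof
  fix w assume "w \<in> L"
  then obtain q where q: "q \<in> \<int>" "w - q *\<^sub>R v0 \<in> M" using reduce by blast
  then obtain c where c: "\<forall>b\<in>B. c b \<in> \<int>" "w - q *\<^sub>R v0 = (\<Sum>b\<in>B. c b *\<^sub>R b)"
    using B(2) unfolding int_spans_def by blast
  define c' where "c' = c(v0 := q)"
  have "(\<Sum>b\<in>insert v0 B. c' b *\<^sub>R b) = q *\<^sub>R v0 + (\<Sum>b\<in>B. c' b *\<^sub>R b)"
    using B(1) v0 by (simp add: c'_def)
  also have "(\<Sum>b\<in>B. c' b *\<^sub>R b) = (\<Sum>b\<in>B. c b *\<^sub>R b)"
    using v0 by (intro sum.cong) (auto simp: c'_def)
  finally have "w = (\<Sum>b\<in>insert v0 B. c' b *\<^sub>R b)" using c(2) by (metis add.commute diff_add_cancel)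
  moreover have "\<forall>b\<in>insert v0 B. c' b \<in> \<int>" using c(1) q(1) by (auto simp: c'_def)
  ultimately show "\<exists>c. (\<forall>b\<in>insert v0 B. c b \<in> \<int>) \<and> w = (\<Sum>b\<in>insert v0 B. c b *\<^sub>R b)"
    by blast
qed

lemma int_lattice_basis_supported_on:
  assumes L: "int_lattice L" and S: "finite S"
  shows "\<exists>B. finite B \<and> B \<subseteq> supported_on L S \<and> independent B \<and> int_spans B (supported_on L S)"
  using S
proof (induction S rule: finite_induct)
  case empty
  have "supported_on L {} \<subseteq> {0}" by (auto simp: supported_on_def vec_eq_iff)
  then show ?case by (intro exI[of _ "{}"]) (auto simp: int_spans_def independent_empty)
next
  case (insert a S)
  then obtain B where B: "finite B" "B \<subseteq> supported_on L S" "independent B" "int_spans B (supported_on L S)"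
    by blast
  let ?L = "supported_on L (insert a S)"
  have L': "int_lattice ?L" using int_lattice_supported_on[OF L] .
  show ?case
  proof (cases "\<forall>v\<in>?L. v $ a = 0")
    case True
    then have "?L = supported_on L S" by (auto simp: supported_on_def)
    then show ?thesis using B by auto
  next
    case False
    then obtain v0 where v0: "v0 \<in> ?L" "v0 $ a \<noteq> 0"
      and reduce: "\<And>w. w \<in> ?L \<Longrightarrow> \<exists>q\<in>\<int>. (w - q *\<^sub>R v0) $ a = 0"
      using int_lattice_coordinate_generator[OF L'] by metis
    have "span B \<subseteq> {x. x $ a = 0}"
      using B(2) insert(2) by (intro span_minimal) (auto simp: supported_on_def subspace_def)
    then have v0B: "v0 \<notin> span B" using v0(2) by auto
    have "\<exists>q\<in>\<int>. w - q *\<^sub>R v0 \<in> supported_on L S" if w: "w \<in> ?L" for w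
    proof -
      obtain q where q: "q \<in> \<int>" "(w - q *\<^sub>R v0) $ a = 0" using reduce[OF w] by blast
      have "w - q *\<^sub>R v0 \<in> ?L" using int_lattice_diff_scaleR[OF L' w v0(1) q(1)] .
      then have "w - q *\<^sub>R v0 \<in> supported_on L S" using q(2) by (auto simp: supported_on_def)
      then show ?thesis using q(1) by blast
    qed
    then have "int_spans (insert v0 B) ?L"
      using int_spans_insert[OF B(1,4)] v0B span_base by blast
    moreover have "insert v0 B \<subseteq> ?L" using B(2) v0(1) by (auto simp: supported_on_def)
    ultimately show ?thesis using B(1) independent_insertI[OF v0B B(3)] by blast
  qed
qed

lemma int_lattice_basis:
  fixes L :: "(real^'m::finite) set"
  assumes "int_lattice L"
  obtains B where "finite B" "B \<subseteq> L" "independent B" "int_spans B L"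
proof -
  have "supported_on L UNIV = L" by (auto simp: supported_on_def)
  then show ?thesis using int_lattice_basis_supported_on[OF assms, of UNIV] that by auto
qed
section \<open>Integral anti-symplectic involutions\<close>

definition symp_form :: "real^('n::finite + 'n) \<Rightarrow> real^('n + 'n) \<Rightarrow> real" where
  "symp_form x y = x \<bullet> (Jmat *v y)"

lemma Jmat_Jmat_vector: "Jmat *v (Jmat *v v) = - (v :: real^('n::finite + 'n))"
  by (simp add: matrix_vector_mul_assoc Jmat_mult_Jmat)
     (simp add: vec_eq_iff matrix_vector_mult_def mat_def sum_negf cong: if_cong)

lemma symp_form_antisym: "symp_form x y = - symp_form y x"
proof -
  have "symp_form x y = (transpose Jmat *v x) \<bullet> y"
    by (simp only: symp_form_def inner_matrix_vector_mult transpose_transpose)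
  also have "\<dots> = - symp_form y x"
    by (simp add: transpose_Jmat symp_form_def inner_commute matrix_vector_mult_uminus)
  finally show ?thesis .
qed

lemma symp_form_nondegenerate: "(\<And>x. symp_form x y = 0) \<Longrightarrow> y = 0"
  using Jmat_Jmat_vector[of y] by (metis inner_eq_zero_iff symp_form_def matrix_vector_mult_0_right neg_equal_0_iff_equal)

lemma symp_form_sum_left: "symp_form (\<Sum>i\<in>S. c i *\<^sub>R v i) y = (\<Sum>i\<in>S. c i * symp_form (v i) y)"
  by (simp add: symp_form_def inner_sum_left)

lemma symp_form_sum_right: "symp_form x (\<Sum>i\<in>S. c i *\<^sub>R v i) = (\<Sum>i\<in>S. c i * symp_form x (v i))"
  by (simp add: symp_form_def matrix_vector_mult_sum_scaleR inner_sum_right)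

lemma symp_form_add_left: "symp_form (x + x') y = symp_form x y + symp_form x' y"
  by (simp add: symp_form_def inner_add_left)

lemma symp_form_diff_right: "symp_form x (y - y') = symp_form x y - symp_form x y'"
  by (simp add: symp_form_def matrix_vector_mult_diff_distrib inner_diff_right)

locale integral_antisymplectic_involution =
  fixes s :: "('n::finite) bmat"
  assumes involution: "s ** s = mat 1"
    and antisymplectic: "transpose s ** Jmat ** s = - Jmat"
    and half_one_plus_integral: "\<forall>i j. (mat 1 + s) $ i $ j / 2 \<in> \<int>"
begin

definition proj :: "'n bmat" where
  "proj = (1/2) *\<^sub>R (mat 1 + s)"

definition fixed_lattice :: "(real^('n + 'n)) set" where
  "fixed_lattice = {v. int_vec v \<and> s *v v = v}"

lemma symp_form_s: "symp_form (s *v x) (s *v y) = - symp_form x y"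
proof -
  have "symp_form (s *v x) (s *v y) = x \<bullet> ((transpose s ** Jmat ** s) *v y)"
    by (simp add: symp_form_def inner_matrix_vector_mult matrix_vector_mul_assoc matrix_mul_assoc)
  then show ?thesis
    by (simp add: antisymplectic symp_form_def vec_eq_iff inner_minus_right matrix_vector_mult_def sum_negf)
       (simp add: inner_vec_def sum_negf)
qed

lemma symp_form_fixed: "s *v x = x \<Longrightarrow> s *v y = y \<Longrightarrow> symp_form x y = 0"
  using symp_form_s[of x y] by simp

lemma symp_form_antifixed: "s *v x = - x \<Longrightarrow> s *v y = - y \<Longrightarrow> symp_form x y = 0"
  using symp_form_s[of x y] by (simp add: symp_form_def matrix_vector_mult_uminus)

lemma proj_integral: "\<forall>i j. proj $ i $ j \<in> \<int>"
  using half_one_plus_integral by (simp add: proj_def)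

lemma proj_apply: "proj *v v = (1/2) *\<^sub>R (v + s *v v)"
  by (simp add: proj_def scaleR_matrix_vector_assoc[symmetric] matrix_vector_mult_add_rdistrib)

lemma s_proj: "s *v (proj *v v) = proj *v v"
  by (simp add: proj_apply matrix_vector_mult_scaleR matrix_vector_right_distrib
      matrix_vector_mul_assoc involution add.commute)

lemma s_proj_complement: "s *v (v - proj *v v) = - (v - proj *v v)"
proof -
  have "s *v (v - proj *v v) = s *v v - proj *v v"
    using s_proj by (simp add: matrix_vector_mult_diff_distrib)
  also have "\<dots> = - (v - proj *v v)"
    by (simp add: proj_apply algebra_simps) (simp add: scaleR_2[symmetric] vec_eq_iff)
  finally show ?thesis .
qed

lemma proj_fixed: "s *v v = v \<Longrightarrow> proj *v v = v"
  by (simp add: proj_apply scaleR_2[symmetric])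

lemma int_lattice_fixed_lattice: "int_lattice fixed_lattice"
  by (auto simp: int_lattice_def fixed_lattice_def int_vec_def matrix_vector_right_distrib
      matrix_vector_mult_scaleR)

text \<open>The functionals are integral because each \<open>proj e\<^sub>k\<close> lies in the fixed lattice.\<close>

lemma proj_expansion:
  assumes B: "int_spans B fixed_lattice"
  obtains c where "\<And>b. b \<in> B \<Longrightarrow> int_vec (c b)" "\<And>v. proj *v v = (\<Sum>b\<in>B. (c b \<bullet> v) *\<^sub>R b)"
proof -
  have "proj *v axis k 1 \<in> fixed_lattice" for k
  proof -
    have "int_vec (axis k 1 :: real^('n + 'n))" by (simp add: int_vec_def axis_def)
    then show ?thesis using s_proj int_vec_matrix_vector_mult[OF proj_integral] by (simp add: fixed_lattice_def)
  qed
  then have "\<forall>k. \<exists>c. (\<forall>b\<in>B. c b \<in> \<int>) \<and> proj *v axis k 1 = (\<Sum>b\<in>B. c b *\<^sub>R b)"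
    using B by (auto simp: int_spans_def)
  then obtain coef where coef: "\<And>k. \<forall>b\<in>B. coef k b \<in> \<int>"
    "\<And>k. proj *v axis k 1 = (\<Sum>b\<in>B. coef k b *\<^sub>R b)"
    using choice[of "\<lambda>k c. (\<forall>b\<in>B. c b \<in> \<int>) \<and> proj *v axis k 1 = (\<Sum>b\<in>B. c b *\<^sub>R b)"]
    by blast
  define c where "c b = (\<chi> k. coef k b)" for b
  have entry: "proj $ j $ k = (\<Sum>b\<in>B. coef k b * b $ j)" for j k
    using arg_cong[OF coef(2)[of k], of "\<lambda>u. u $ j"] by (simp add: matrix_vector_mult_basis column_def)
  have "(proj *v v) $ j = (\<Sum>b\<in>B. (c b \<bullet> v) *\<^sub>R b) $ j" for v j
  proof -
    have "(proj *v v) $ j = (\<Sum>k\<in>UNIV. \<Sum>b\<in>B. coef k b * b $ j * v $ k)"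
      by (simp add: matrix_vector_mult_def entry sum_distrib_right)
    also have "\<dots> = (\<Sum>b\<in>B. \<Sum>k\<in>UNIV. coef k b * b $ j * v $ k)" by (rule sum.swap)
    also have "\<dots> = (\<Sum>b\<in>B. (c b \<bullet> v) *\<^sub>R b) $ j"
      by (simp add: c_def inner_vec_def sum_distrib_right sum_distrib_left mult_ac)
    finally show ?thesis .
  qed
  then have "proj *v v = (\<Sum>b\<in>B. (c b \<bullet> v) *\<^sub>R b)" for v by (simp add: vec_eq_iff)
  moreover have "int_vec (c b)" if "b \<in> B" for b using coef(1) that by (simp add: int_vec_def c_def)
  ultimately show ?thesis using that by blast
qed

end

text \<open>The frame \<open>B \<union> partner ` B\<close> built here is a symplectic basis adapted to \<open>s\<close>.\<close>

locale integral_antisymplectic_involution_frame = integral_antisymplectic_involution s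
  for s :: "('n::finite) bmat" +
  fixes B :: "(real^('n + 'n)) set" and c :: "real^('n + 'n) \<Rightarrow> real^('n + 'n)"
  assumes finite_B: "finite B"
    and B_fixed: "B \<subseteq> fixed_lattice"
    and independent_B: "independent B"
    and int_vec_c: "\<And>b. b \<in> B \<Longrightarrow> int_vec (c b)"
    and proj_eq: "\<And>v. proj *v v = (\<Sum>b\<in>B. (c b \<bullet> v) *\<^sub>R b)"
begin

lemma s_B: "b \<in> B \<Longrightarrow> s *v b = b"
  using B_fixed by (auto simp: fixed_lattice_def)

lemma int_vec_B: "b \<in> B \<Longrightarrow> int_vec b"
  using B_fixed by (auto simp: fixed_lattice_def)

lemma independent_B_coeff: "(\<Sum>v\<in>B. u v *\<^sub>R v) = 0 \<Longrightarrow> b \<in> B \<Longrightarrow> u b = 0"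
  using independent_B independent_explicit by blast

lemma c_dual: "b \<in> B \<Longrightarrow> b' \<in> B \<Longrightarrow> c b \<bullet> b' = (if b = b' then 1 else 0)"
proof -
  assume b: "b \<in> B" and b': "b' \<in> B"
  have "b' = (\<Sum>v\<in>B. (c v \<bullet> b') *\<^sub>R v)" using proj_eq[of b'] proj_fixed[OF s_B[OF b']] by simp
  moreover have "b' = (\<Sum>v\<in>B. (if v = b' then 1 else 0) *\<^sub>R v)"
    using sum_scaleR_if_eq[OF finite_B b'] by simp
  ultimately have "(\<Sum>v\<in>B. (c v \<bullet> b' - (if v = b' then 1 else 0)) *\<^sub>R v) = 0"
    by (simp add: scaleR_left_diff_distrib sum_subtractf)
  from independent_B_coeff[OF this b] show ?thesis by simp
qed

text \<open>\<open>\<omega>(b', -J c\<^sub>b) = \<langle>b', c\<^sub>b\<rangle>\<close>, and removing the \<open>+1\<close>-eigencomponent keeps this pairing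
  because the \<open>+1\<close>-eigenspace is isotropic.\<close>

definition partner :: "real^('n + 'n) \<Rightarrow> real^('n + 'n)" where
  "partner b = - (Jmat *v c b) - proj *v (- (Jmat *v c b))"

lemma s_partner: "s *v partner b = - partner b"
  unfolding partner_def by (rule s_proj_complement)

lemma int_vec_partner: "b \<in> B \<Longrightarrow> int_vec (partner b)"
proof -
  have "\<forall>i j. (Jmat :: 'n bmat) $ i $ j \<in> \<int>" by (auto simp: Jmat_def split: sum.splits)
  then show "b \<in> B \<Longrightarrow> int_vec (partner b)"
    unfolding partner_def
    by (intro int_vec_diff int_vec_uminus int_vec_matrix_vector_mult[OF proj_integral]
        int_vec_matrix_vector_mult int_vec_c)
qed

lemma symp_form_partner: "b \<in> B \<Longrightarrow> b' \<in> B \<Longrightarrow> symp_form b' (partner b) = (if b = b' then 1 else 0)"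
proof -
  assume b: "b \<in> B" and b': "b' \<in> B"
  have "symp_form b' (- (Jmat *v c b)) = b' \<bullet> c b"
    by (simp add: symp_form_def matrix_vector_mult_uminus Jmat_Jmat_vector)
  also have "\<dots> = (if b = b' then 1 else 0)" using c_dual[OF b b'] by (simp add: inner_commute)
  finally show ?thesis
    using symp_form_fixed[OF s_B[OF b'] s_proj] by (simp add: partner_def symp_form_diff_right)
qed

lemma inj_on_partner: "inj_on partner B"
proof (rule inj_onI)
  fix b1 b2 assume b: "b1 \<in> B" "b2 \<in> B" "partner b1 = partner b2"
  then have "symp_form b1 (partner b2) = 1" using symp_form_partner[OF b(1) b(1)] by simp
  then show "b1 = b2" using symp_form_partner[OF b(2) b(1)] by (auto split: if_splits)
qed

lemma B_disjoint_partner: "B \<inter> partner ` B = {}"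
proof (rule ccontr)
  assume "B \<inter> partner ` B \<noteq> {}"
  then obtain b where b: "b \<in> B" "partner b \<in> B" by blast
  have "symp_form b (partner b) = 0" using symp_form_fixed[OF s_B[OF b(1)] s_B[OF b(2)]] .
  then show False using symp_form_partner[OF b(1) b(1)] by simp
qed

lemma independent_frame: "independent (B \<union> partner ` B)"
proof -
  have "\<forall>v\<in>B \<union> partner ` B. u v = 0" if u: "(\<Sum>v\<in>B \<union> partner ` B. u v *\<^sub>R v) = 0" for u
  proof -
    have "(\<Sum>v\<in>B \<union> partner ` B. u v *\<^sub>R v) = (\<Sum>v\<in>B. u v *\<^sub>R v) + (\<Sum>b\<in>B. u (partner b) *\<^sub>R partner b)"
      using finite_B B_disjoint_partner by (simp add: sum.union_disjoint sum.reindex[OF inj_on_partner])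
    then have sum0: "(\<Sum>v\<in>B. u v *\<^sub>R v) + (\<Sum>b\<in>B. u (partner b) *\<^sub>R partner b) = 0" using u by simp
    have partner0: "u (partner b') = 0" if b': "b' \<in> B" for b'
    proof -
      have "0 = symp_form b' ((\<Sum>v\<in>B. u v *\<^sub>R v) + (\<Sum>b\<in>B. u (partner b) *\<^sub>R partner b))"
        using sum0 by (simp add: symp_form_def)
      also have "\<dots> = (\<Sum>v\<in>B. u v * symp_form b' v) + (\<Sum>b\<in>B. u (partner b) * symp_form b' (partner b))"
        by (simp add: symp_form_def matrix_vector_right_distrib inner_add_right
            symp_form_sum_right[unfolded symp_form_def])
      also have "(\<Sum>v\<in>B. u v * symp_form b' v) = 0"
        using symp_form_fixed[OF s_B[OF b'] s_B] by (intro sum.neutral) auto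
      also have "(\<Sum>b\<in>B. u (partner b) * symp_form b' (partner b)) = u (partner b')"
        using sum_mult_if_eq[OF finite_B b', of "\<lambda>b. u (partner b)"] symp_form_partner[OF _ b']
        by (simp cong: sum.cong)
      finally show ?thesis by simp
    qed
    then have "(\<Sum>v\<in>B. u v *\<^sub>R v) = 0" using sum0 by simp
    then show ?thesis using independent_B_coeff partner0 by auto
  qed
  then show ?thesis using finite_B independent_explicit by blast
qed

lemma span_frame: "UNIV \<subseteq> span (B \<union> partner ` B)"
proof
  fix z :: "real^('n + 'n)"
  define w where "w = z - proj *v z"
  define w' where "w' = w - (\<Sum>b\<in>B. symp_form b w *\<^sub>R partner b)"
  have s_w': "s *v w' = - w'"
    using s_proj_complement[of z] s_partner
    by (simp add: w'_def w_def matrix_vector_mult_diff_distrib matrix_vector_mult_sum_scaleR sum_negf)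
  have B_w': "symp_form b' w' = 0" if b': "b' \<in> B" for b'
  proof -
    have "(\<Sum>b\<in>B. symp_form b w * symp_form b' (partner b)) = symp_form b' w"
      using sum_mult_if_eq[OF finite_B b', of "\<lambda>b. symp_form b w"] symp_form_partner[OF _ b']
      by (simp cong: sum.cong)
    then show ?thesis by (simp add: w'_def symp_form_diff_right symp_form_sum_right)
  qed
  have "symp_form x w' = 0" for x
  proof -
    have "symp_form x w' = symp_form (proj *v x) w' + symp_form (x - proj *v x) w'"
      by (simp add: symp_form_add_left[symmetric])
    also have "symp_form (proj *v x) w' = 0" unfolding proj_eq symp_form_sum_left using B_w' by simp
    also have "symp_form (x - proj *v x) w' = 0" using symp_form_antifixed[OF s_proj_complement s_w'] .
    finally show ?thesis by simp
  qed
  then have "w' = 0" by (rule symp_form_nondegenerate)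
  then have "z = (\<Sum>b\<in>B. (c b \<bullet> z) *\<^sub>R b) + (\<Sum>b\<in>B. symp_form b w *\<^sub>R partner b)"
    using proj_eq[of z] by (simp add: w'_def w_def)
  then show "z \<in> span (B \<union> partner ` B)"
    by (metis (no_types, lifting) span_add span_sum span_scale span_base UnI1 UnI2 imageI)
qed

lemma card_B: "card B = CARD('n)"
proof -
  have "card (B \<union> partner ` B) = 2 * card B"
    using card_Un_disjoint[OF finite_B _ B_disjoint_partner] card_image[OF inj_on_partner] finite_B by simp
  moreover have "card (B \<union> partner ` B) = DIM(real^('n + 'n))"
    using basis_card_eq_dim[OF _ span_frame independent_frame] by simp
  moreover have "DIM(real^('n + 'n)) = 2 * CARD('n)"
    by (simp add: card_Plus flip: UNIV_Plus_UNIV)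
  ultimately show ?thesis by simp
qed

definition frame_mat :: "('n \<Rightarrow> real^('n + 'n)) \<Rightarrow> 'n bmat" where
  "frame_mat \<beta> = (\<chi> r k. (case k of Inl i \<Rightarrow> \<beta> i | Inr i \<Rightarrow> partner (\<beta> i)) $ r)"

lemma column_frame_mat:
  "column (Inl i) (frame_mat \<beta>) = \<beta> i" "column (Inr i) (frame_mat \<beta>) = partner (\<beta> i)"
  by (simp_all add: frame_mat_def column_def vec_eq_iff)

lemma frame_mat_in_SpZ:
  assumes "bij_betw \<beta> UNIV B"
  shows "frame_mat \<beta> \<in> SpZ"
proof -
  have \<beta>: "\<beta> i \<in> B" for i using assms by (auto simp: bij_betw_def)
  have \<beta>_eq: "\<beta> i = \<beta> j \<longleftrightarrow> i = j" for i j using assms by (auto simp: bij_betw_def inj_on_def)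
  have entry: "(transpose (frame_mat \<beta>) ** Jmat ** frame_mat \<beta>) $ k $ l
      = symp_form (column k (frame_mat \<beta>)) (column l (frame_mat \<beta>))" for k l
    by (simp only: transpose_mult_mult_entry symp_form_def)
  have "transpose (frame_mat \<beta>) ** Jmat ** frame_mat \<beta> = Jmat"
  proof (rule bmat_eqI)
    fix i j
    show "(transpose (frame_mat \<beta>) ** Jmat ** frame_mat \<beta>) $ Inl i $ Inl j = Jmat $ Inl i $ Inl j"
      by (simp only: entry column_frame_mat Jmat_entries symp_form_fixed[OF s_B[OF \<beta>] s_B[OF \<beta>]])
    show "(transpose (frame_mat \<beta>) ** Jmat ** frame_mat \<beta>) $ Inl i $ Inr j = Jmat $ Inl i $ Inr j"
      by (simp add: entry column_frame_mat Jmat_entries symp_form_partner[OF \<beta> \<beta>] \<beta>_eq eq_commute)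
    show "(transpose (frame_mat \<beta>) ** Jmat ** frame_mat \<beta>) $ Inr i $ Inl j = Jmat $ Inr i $ Inl j"
      by (simp add: entry column_frame_mat Jmat_entries symp_form_antisym[of "partner (\<beta> i)"]
          symp_form_partner[OF \<beta> \<beta>] \<beta>_eq)
    show "(transpose (frame_mat \<beta>) ** Jmat ** frame_mat \<beta>) $ Inr i $ Inr j = Jmat $ Inr i $ Inr j"
      by (simp only: entry column_frame_mat Jmat_entries symp_form_antifixed[OF s_partner s_partner])
  qed
  moreover have "frame_mat \<beta> $ i $ j \<in> \<int>" for i j
    using int_vec_B[OF \<beta>] int_vec_partner[OF \<beta>]
    by (cases j) (simp_all add: frame_mat_def int_vec_def)
  ultimately show ?thesis by (simp add: SpZ_def Sp_def)
qed

lemma frame_mat_entry: "frame_mat \<beta> $ r $ k = column k (frame_mat \<beta>) $ r"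
  by (simp add: column_def)

lemma s_frame_mat:
  assumes "\<And>i. \<beta> i \<in> B"
  shows "s ** frame_mat \<beta> = frame_mat \<beta> ** Emat"
proof -
  have "(s ** frame_mat \<beta>) $ r $ k = (frame_mat \<beta> ** Emat) $ r $ k" for r k
  proof -
    have "(s ** frame_mat \<beta>) $ r $ k = (s *v column k (frame_mat \<beta>)) $ r"
      by (simp add: column_def matrix_matrix_mult_def matrix_vector_mult_def)
    moreover have "(frame_mat \<beta> ** Emat) $ r $ k
        = (case k of Inl _ \<Rightarrow> column k (frame_mat \<beta>) $ r | Inr _ \<Rightarrow> - column k (frame_mat \<beta>) $ r)"
      by (cases k) (simp_all only: matrix_mult_Plus_entry Emat_entries frame_mat_entry; simp add: sum_negf)+
    ultimately show ?thesis
      using s_B[OF assms] s_partner by (cases k) (simp_all add: column_frame_mat)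
  qed
  then show ?thesis by (simp add: vec_eq_iff)
qed

end

context integral_antisymplectic_involution
begin

theorem conjugate_Emat: "\<exists>h\<in>SpZ. s ** h = h ** Emat"
proof -
  obtain B where B: "finite B" "B \<subseteq> fixed_lattice" "independent B" "int_spans B fixed_lattice"
    using int_lattice_basis[OF int_lattice_fixed_lattice] by blast
  obtain c where "\<And>b. b \<in> B \<Longrightarrow> int_vec (c b)" "\<And>v. proj *v v = (\<Sum>b\<in>B. (c b \<bullet> v) *\<^sub>R b)"
    using proj_expansion[OF B(4)] by blast
  then interpret frame: integral_antisymplectic_involution_frame s B c
    using B by unfold_locales
  obtain \<beta> where \<beta>: "bij_betw \<beta> (UNIV :: 'n set) B"
    using finite_same_card_bij[of "UNIV :: 'n set" B] B(1) frame.card_B by auto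
  then have "\<And>i. \<beta> i \<in> B" by (auto simp: bij_betw_def)
  then show ?thesis using frame.frame_mat_in_SpZ[OF \<beta>] frame.s_frame_mat by blast
qed

end

section \<open>The congruence subgroup \<open>\<Gamma>(2)\<close>\<close>

lemma Gamma2_decompose:
  assumes "\<gamma> \<in> Gamma2"
  obtains K where "\<forall>i j. K $ i $ j \<in> \<int>" "\<gamma> = mat 1 + 2 *\<^sub>R K"
proof
  define K where "K = (1/2) *\<^sub>R (\<gamma> - mat 1)"
  show "\<forall>i j. K $ i $ j \<in> \<int>"
  proof (intro allI)
    fix i j
    obtain k :: int where "\<gamma> $ i $ j - mat 1 $ i $ j = 2 * of_int k"
      using assms by (auto simp: Gamma2_def)
    then show "K $ i $ j \<in> \<int>" by (simp add: K_def)
  qed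
  show "\<gamma> = mat 1 + 2 *\<^sub>R K"
    by (simp add: K_def vec_eq_iff)
qed

lemma tau_mat_add_scaleR: "tau_mat (A + r *\<^sub>R B) = tau_mat A + r *\<^sub>R tau_mat B"
  by (simp add: tau_mat_def vec_eq_iff split: sum.splits)

lemma tau_mat_mat: "tau_mat (mat 1) = mat 1"
  by (simp add: tau_mat_def vec_eq_iff mat_def split: sum.splits)

lemma Ints_mult_4_neq:
  fixes x :: real
  assumes "x \<in> \<int>"
  shows "4 * x \<noteq> -2"
proof
  assume eq: "4 * x = -2"
  obtain z :: int where "x = of_int z" using assms by (auto elim: Ints_cases)
  with eq have "real_of_int (4 * z) = real_of_int (-2)" by simp
  then have "4 * z = -2" by (simp only: of_int_eq_iff)
  then show False by presburger
qed

lemma Gamma2_tau_mat_mult_neq_neg: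
  fixes \<gamma> :: "('n::finite) bmat"
  assumes "\<gamma> \<in> Gamma2"
  shows "tau_mat \<gamma> ** \<gamma> \<noteq> - mat 1"
proof
  fix a :: 'n
  obtain K where K: "\<forall>i j. K $ i $ j \<in> \<int>" and \<gamma>: "\<gamma> = mat 1 + 2 *\<^sub>R K"
    using Gamma2_decompose[OF assms] by blast
  define P where "P = tau_mat K ** K"
  have "tau_mat \<gamma> ** \<gamma> = mat 1 + 2 *\<^sub>R (tau_mat K + K) + 4 *\<^sub>R P"
    by (simp add: \<gamma> P_def tau_mat_add_scaleR tau_mat_mat matrix_add_ldistrib matrix_add_rdistrib
        matrix_scalar_ac scalar_matrix_assoc[symmetric] scaleR_add_right)
  then have "(tau_mat \<gamma> ** \<gamma>) $ Inl a $ Inl a = 1 + 4 * (K $ Inl a $ Inl a + P $ Inl a $ Inl a)"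
    by (simp add: mat_def tau_mat_def algebra_simps)
  moreover assume "tau_mat \<gamma> ** \<gamma> = - mat 1"
  ultimately have "4 * (K $ Inl a $ Inl a + P $ Inl a $ Inl a) = -2"
    by (simp add: mat_def)
  moreover have "4 * (K $ Inl a $ Inl a + P $ Inl a $ Inl a) \<noteq> -2"
  proof (rule Ints_mult_4_neq)
    have "\<forall>i j. tau_mat K $ i $ j \<in> \<int>" using K by (auto simp: tau_mat_def split: sum.splits)
    then have "\<forall>i j. P $ i $ j \<in> \<int>" using K Ints_matrix_mult by (simp add: P_def)
    then show "K $ Inl a $ Inl a + P $ Inl a $ Inl a \<in> \<int>" using K by (simp add: Ints_add)
  qed
  ultimately show False by contradiction
qed

lemma Gamma2_Emat_mult_involution:
  assumes "\<gamma> \<in> Gamma2" and "tau_mat \<gamma> ** \<gamma> = mat 1"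
  shows "integral_antisymplectic_involution (Emat ** \<gamma>)"
proof
  obtain K where K: "\<forall>i j. K $ i $ j \<in> \<int>" and \<gamma>: "\<gamma> = mat 1 + 2 *\<^sub>R K"
    using Gamma2_decompose[OF assms(1)] by blast
  have \<gamma>_Sp: "\<gamma> \<in> Sp" using assms(1) by (simp add: Gamma2_def SpZ_def)
  show "(Emat ** \<gamma>) ** (Emat ** \<gamma>) = mat 1"
    using assms(2) by (simp add: tau_mat_eq_Emat_conj matrix_mul_assoc)
  have "transpose (Emat ** \<gamma>) ** Jmat ** (Emat ** \<gamma>) = transpose \<gamma> ** (Emat ** Jmat ** Emat) ** \<gamma>"
    by (simp add: matrix_transpose_mul transpose_Emat matrix_mul_assoc)
  then show "transpose (Emat ** \<gamma>) ** Jmat ** (Emat ** \<gamma>) = - Jmat"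
    using \<gamma>_Sp by (simp add: Emat_Jmat_Emat matrix_mul_lneg matrix_mul_rneg matrix_mul_assoc Sp_def)
  have "(Emat ** \<gamma>) $ i $ j = (case i of Inl _ \<Rightarrow> \<gamma> $ i $ j | Inr _ \<Rightarrow> - \<gamma> $ i $ j)" for i j
    by (cases i) (simp_all add: matrix_mult_Plus_entry Emat_entries sum_negf)
  then have "(mat 1 + Emat ** \<gamma>) $ i $ j / 2
      = (case i of Inl _ \<Rightarrow> mat 1 $ i $ j + K $ i $ j | Inr _ \<Rightarrow> - K $ i $ j)" for i j
    by (cases i) (simp_all add: \<gamma>)
  then show "\<forall>i j. (mat 1 + Emat ** \<gamma>) $ i $ j / 2 \<in> \<int>"
    using K by (auto simp: mat_def split: sum.splits)
qed

lemma Gamma2_tau_coboundary: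
  assumes "\<gamma> \<in> Gamma2" and "tau_mat \<gamma> ** \<gamma> = mat 1"
  shows "\<exists>h\<in>SpZ. \<gamma> = tau_mat h ** matrix_inv h"
proof -
  obtain h where h: "h \<in> SpZ" "Emat ** \<gamma> ** h = h ** Emat"
    using integral_antisymplectic_involution.conjugate_Emat[OF Gamma2_Emat_mult_involution[OF assms]]
    by blast
  have "\<gamma> ** h = Emat ** (Emat ** \<gamma> ** h)" by (simp add: matrix_mul_assoc Emat_mult_Emat)
  also have "\<dots> = Emat ** h ** Emat" by (simp add: h(2) matrix_mul_assoc)
  also have "\<dots> = tau_mat h" by (simp add: tau_mat_eq_Emat_conj)
  finally have "\<gamma> ** h = tau_mat h" .
  moreover have "h ** matrix_inv h = mat 1" using h(1) by (simp add: SpZ_def Sp_matrix_inv)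
  ultimately have "\<gamma> = tau_mat h ** matrix_inv h" by (metis matrix_mul_assoc matrix_mul_rid)
  then show ?thesis using h(1) by blast
qed

section \<open>Fixed points of the twisted action\<close>

lemma tau_mat_mult_fixes:
  assumes "\<gamma> \<in> Sp" "Z \<in> siegel" "tau_pt Z = sp_act \<gamma> Z"
  shows "sp_act (tau_mat \<gamma> ** \<gamma>) Z = Z"
proof -
  have "sp_act (tau_mat \<gamma> ** \<gamma>) Z = sp_act (tau_mat \<gamma>) (tau_pt Z)"
    using sp_act_mult[OF tau_mat_in_Sp[OF assms(1)] assms(1,2)] assms(3) by simp
  also have "\<dots> = tau_pt (sp_act \<gamma> Z)"
    using sp_act_tau[OF assms(1,2)] .
  also have "\<dots> = Z"
    by (simp flip: assms(3) add: tau_pt_tau_pt)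
  finally show ?thesis .
qed

lemma tau_pt_fixed_points: "{X \<in> siegel. tau_pt X = X} = iCn"
proof (intro set_eqI iffI)
  fix X assume "X \<in> {X \<in> siegel. tau_pt X = X}"
  then have X: "X \<in> siegel" "tau_pt X = X" by auto
  have "X = (\<chi> i j. \<i> * complex_of_real (ImM X $ i $ j))"
  proof -
    have "- cnj (X $ i $ j) = X $ i $ j" for i j using X(2) by (metis tau_pt_def vec_lambda_beta)
    then show ?thesis by (simp add: vec_eq_iff ImM_def complex_eq_iff)
  qed
  moreover have "ImM X \<in> posdef_cone" using X(1) by (simp add: siegel_def)
  ultimately show "X \<in> iCn" unfolding iCn_def by blast
next
  fix X assume "X \<in> iCn"
  then obtain Y where Y: "Y \<in> posdef_cone" "X = (\<chi> i j. \<i> * complex_of_real (Y $ i $ j))"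
    by (auto simp: iCn_def)
  have "transpose Y = Y" using Y(1) by (simp add: posdef_cone_def)
  then have "transpose X = X"
    using Y(2) by (metis (no_types, lifting) transpose_def vec_lambda_beta vec_lambda_unique)
  moreover have "ImM X = Y" by (simp add: Y(2) ImM_def vec_eq_iff)
  moreover have "tau_pt X = X" by (simp add: Y(2) tau_pt_def vec_eq_iff)
  ultimately show "X \<in> {X \<in> siegel. tau_pt X = X}" using Y(1) by (simp add: siegel_def)
qed

text \<open>With \<open>Z = h W\<close>: \<open>\<tau>(h) h\<^sup>-\<^sup>1 Z = \<tau>(h) W\<close> and \<open>\<tau>(Z) = \<tau>(h) \<tau>(W)\<close>.\<close>

lemma sp_act_in_fixset_iff:
  assumes h: "h \<in> Sp" and W: "W \<in> siegel"
  shows "sp_act h W \<in> fixset (tau_mat h ** matrix_inv h) \<longleftrightarrow> tau_pt W = W"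
proof -
  have hW: "sp_act h W \<in> siegel" using sp_act_in_siegel[OF h W] .
  have "sp_act (tau_mat h ** matrix_inv h) (sp_act h W) = sp_act (tau_mat h) W"
    using h W hW by (simp add: sp_act_mult tau_mat_in_Sp matrix_inv_in_Sp sp_act_matrix_inv)
  moreover have "tau_pt (sp_act h W) = sp_act (tau_mat h) (tau_pt W)"
    using h W by (simp add: sp_act_tau)
  ultimately show ?thesis
    using sp_act_inj[OF tau_mat_in_Sp[OF h] W tau_pt_in_siegel[OF W]] hW
    by (auto simp: fixset_def)
qed

lemma fixset_tau_coboundary:
  assumes h: "h \<in> Sp"
  shows "fixset (tau_mat h ** matrix_inv h) = sp_act h ` iCn"
proof -
  have "fixset (tau_mat h ** matrix_inv h) = sp_act h ` {W \<in> siegel. tau_pt W = W}"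
  proof (intro set_eqI iffI)
    fix Z assume Z: "Z \<in> fixset (tau_mat h ** matrix_inv h)"
    then have "Z \<in> siegel" by (simp add: fixset_def)
    then have "Z = sp_act h (sp_act (matrix_inv h) Z)" "sp_act (matrix_inv h) Z \<in> siegel"
      using sp_act_matrix_inv(2)[OF h] sp_act_in_siegel[OF matrix_inv_in_Sp[OF h]] by auto
    then show "Z \<in> sp_act h ` {W \<in> siegel. tau_pt W = W}"
      using Z sp_act_in_fixset_iff[OF h] by (metis (mono_tags, lifting) image_eqI mem_Collect_eq)
  qed (use sp_act_in_fixset_iff[OF h] in auto)
  then show ?thesis by (simp add: tau_pt_fixed_points)
qed

theorem proposition4p7:
  fixes \<gamma> :: "('n::finite) bmat" and Z :: "complex^'n^'n"
  assumes "\<gamma> \<in> Gamma2"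
    and "Z \<in> siegel"
    and "\<forall>g \<in> SpZ. sp_act g Z = Z \<longrightarrow> g = mat 1 \<or> g = - mat 1"
    and "tau_pt Z = sp_act \<gamma> Z"
  shows "\<exists>h \<in> (SpZ :: 'n bmat set). \<gamma> = tau_mat h ** matrix_inv h
           \<and> fixset \<gamma> = sp_act h ` iCn"
proof -
  have \<gamma>: "\<gamma> \<in> SpZ" using assms(1) by (simp add: Gamma2_def)
  then have "tau_mat \<gamma> ** \<gamma> \<in> SpZ" by (simp add: SpZ_mult tau_mat_in_SpZ)
  moreover have "sp_act (tau_mat \<gamma> ** \<gamma>) Z = Z"
    using tau_mat_mult_fixes[OF _ assms(2,4)] \<gamma> by (simp add: SpZ_def)
  ultimately have "tau_mat \<gamma> ** \<gamma> = mat 1"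
    using assms(3) Gamma2_tau_mat_mult_neq_neg[OF assms(1)] by blast
  then obtain h where h: "h \<in> SpZ" "\<gamma> = tau_mat h ** matrix_inv h"
    using Gamma2_tau_coboundary[OF assms(1)] by blast
  moreover have "h \<in> Sp" using h(1) by (simp add: SpZ_def)
  ultimately have "fixset \<gamma> = sp_act h ` iCn"
    using fixset_tau_coboundary by simp
  then show ?thesis using h by blast
qed

end
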